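(* For every integer $r\geq 2$, $$\sum_{M\geq1}h_r(M)z^M=\frac{z+z^2+\cdots+z^{r-1}}{1-z-z^2-\cdots-z^r}.$$
   Context: The perimeter of a nonempty partition $\lambda$ with largest part $\lambda_1$ and $\ell(\lambda)$ parts is $\lambda_1+\ell(\lambda)-1$. For $r\geq2$, $h_r(M)$ is the number of partitions with perimeter $M$ in which every part value occurs fewer than $r$ times. *)

theory Defs
  imports Main "HOL-Computational_Algebra.Formal_Power_Series"
begin

definition is_partition :: "nat list \<Rightarrow> bool" where
  "is_partition xs \<longleftrightarrow> sorted_wrt (\<ge>) xs \<and> (\<forall>x\<in>set xs. 0 < x)"

definition perimeter :: "nat list \<Rightarrow> nat" where
  "perimeter xs = Max (set xs) + length xs - 1"

definition h :: "nat \<Rightarrow> nat \<Rightarrow> nat" where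
  "h r M = card {xs. is_partition xs \<and> xs \<noteq> [] \<and> perimeter xs = M
                     \<and> (\<forall>v. count_list xs v < r)}"

end

theory Submission
  imports Defs
begin

text \<open>A partition with exactly \<open>m\<close> parts equal to 1 arises uniquely from a (possibly
  empty) partition \<open>zs\<close> by adding 1 to every part and appending \<open>m\<close> ones. This raises the
  perimeter by \<open>m + 1\<close> and shifts every multiplicity one value up, so the bound \<open>r\<close> on
  multiplicities is kept exactly when \<open>m < r\<close>. Summing over \<open>m < r\<close> gives the recurrence
  \<open>h\<^sub>r(M) = h\<^sub>r(M-1) + \<dots> + h\<^sub>r(M-r) + [1 \<le> M < r]\<close>, the indicator counting
  \<open>zs = []\<close>, and this recurrence is equivalent to the generating function identity.\<close>

definition h_partitions :: "nat \<Rightarrow> nat \<Rightarrow> nat list set" where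
  "h_partitions r M =
     {xs. is_partition xs \<and> xs \<noteq> [] \<and> perimeter xs = M \<and> (\<forall>v. count_list xs v < r)}"

lemma h_eq_card_h_partitions: "h r M = card (h_partitions r M)"
  by (simp add: h_def h_partitions_def)

lemma perimeter_sorted_desc:
  assumes "sorted_wrt (\<ge>) xs" "xs \<noteq> []"
  shows "perimeter xs = hd xs + length xs - 1"
proof -
  have "Max (set xs) = hd xs"
    using assms by (cases xs) (auto intro!: Max_eqI)
  then show ?thesis by (simp add: perimeter_def)
qed

lemma partition_perimeter_bounds:
  assumes "is_partition xs" "xs \<noteq> []"
  shows "set xs \<subseteq> {1..perimeter xs}" "length xs \<le> perimeter xs"
proof -
  have sorted: "sorted_wrt (\<ge>) xs" and pos: "\<forall>x\<in>set xs. 0 < x"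
    using assms(1) by (auto simp: is_partition_def)
  have "0 < hd xs" "0 < length xs"
    using pos assms(2) by simp_all
  with perimeter_sorted_desc[OF sorted assms(2)]
  have hd_le: "hd xs \<le> perimeter xs" and length_le: "length xs \<le> perimeter xs"
    by linarith+
  show "length xs \<le> perimeter xs"
    by (fact length_le)
  have "x \<le> hd xs" if "x \<in> set xs" for x
    using sorted that assms(2) by (cases xs) auto
  with hd_le pos show "set xs \<subseteq> {1..perimeter xs}"
    by fastforce
qed

lemma finite_h_partitions: "finite (h_partitions r M)"
proof (rule finite_subset)
  show "h_partitions r M \<subseteq> {xs. set xs \<subseteq> {0..M} \<and> length xs \<le> M}"
    using partition_perimeter_bounds by (fastforce simp: h_partitions_def)
qed (rule finite_lists_length_le, simp)

lemma h_partitions_0: "h_partitions r 0 = {}"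
  using partition_perimeter_bounds(1) by (fastforce simp: h_partitions_def)

lemma h_0: "h r 0 = 0"
  by (simp add: h_eq_card_h_partitions h_partitions_0)

definition add_ones :: "nat \<Rightarrow> nat list \<Rightarrow> nat list" where
  "add_ones m zs = map Suc zs @ replicate m 1"

lemma inj_add_ones: "inj (add_ones m)"
  by (rule injI) (simp add: add_ones_def)

lemma is_partition_add_ones:
  assumes "is_partition zs"
  shows "is_partition (add_ones m zs)"
proof -
  have "sorted_wrt (\<ge>) (replicate m (1::nat))"
    by (induction m) auto
  then show ?thesis
    using assms by (auto simp: is_partition_def add_ones_def sorted_wrt_append sorted_wrt_map)
qed

lemma perimeter_add_ones:
  assumes "is_partition zs" "zs \<noteq> []"
  shows "perimeter (add_ones m zs) = perimeter zs + m + 1"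
proof -
  have "sorted_wrt (\<ge>) zs" "sorted_wrt (\<ge>) (add_ones m zs)"
    using assms(1) is_partition_add_ones[OF assms(1)] by (simp_all add: is_partition_def)
  moreover have "add_ones m zs \<noteq> []" "length (add_ones m zs) = length zs + m"
    using assms(2) by (simp_all add: add_ones_def)
  moreover have "hd (add_ones m zs) = Suc (hd zs)"
    using assms(2) by (cases zs) (simp_all add: add_ones_def)
  moreover have "0 < hd zs"
    using assms by (cases zs) (simp_all add: is_partition_def)
  ultimately show ?thesis
    using perimeter_sorted_desc assms(2) by simp
qed

lemma perimeter_add_ones_Nil: "0 < m \<Longrightarrow> perimeter (add_ones m []) = m"
  by (simp add: add_ones_def perimeter_def)

lemma count_list_replicate: "count_list (replicate m a) v = (if v = a then m else 0)"
  by (induction m) auto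

lemma count_list_add_ones_0: "count_list (add_ones m zs) 0 = 0"
  by (auto simp: add_ones_def count_list_replicate)

lemma count_list_add_ones_Suc:
  "count_list (add_ones m zs) (Suc v) = count_list zs v + (if v = 0 then m else 0)"
  by (simp add: add_ones_def count_list_replicate count_list_map_conv)

lemma count_list_partition_0: "is_partition zs \<Longrightarrow> count_list zs 0 = 0"
  by (auto simp: is_partition_def count_list_0_iff)

lemma count_list_add_ones_1: "is_partition zs \<Longrightarrow> count_list (add_ones m zs) 1 = m"
  using count_list_add_ones_Suc[of m zs 0] by (simp add: count_list_partition_0)

lemma count_list_add_ones_less_iff:
  assumes "is_partition zs" "m < r"
  shows "(\<forall>v. count_list (add_ones m zs) v < r) \<longleftrightarrow> (\<forall>v. count_list zs v < r)"
proof
  assume "\<forall>v. count_list (add_ones m zs) v < r"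
  then show "\<forall>v. count_list zs v < r"
    using count_list_add_ones_Suc[of m zs] by (metis le_add1 le_less_trans)
next
  assume zs_less: "\<forall>v. count_list zs v < r"
  show "\<forall>v. count_list (add_ones m zs) v < r"
  proof
    fix v
    show "count_list (add_ones m zs) v < r"
      using assms zs_less count_list_partition_0 count_list_add_ones_0 count_list_add_ones_Suc
      by (cases v) auto
  qed
qed

lemma partition_eq_add_ones:
  assumes "is_partition xs"
  obtains zs where "is_partition zs" "xs = add_ones (count_list xs 1) zs"
proof
  let ?zs = "map (\<lambda>x. x - 1) (filter ((<) 1) xs)"
  have sorted: "sorted_wrt (\<ge>) xs" and pos: "\<forall>x\<in>set xs. 0 < x"
    using assms by (auto simp: is_partition_def)
  show "is_partition ?zs"
    using sorted_wrt_filter[OF sorted, of "(<) 1"]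
    by (auto simp: is_partition_def sorted_wrt_map elim: sorted_wrt_mono_rel[rotated])
  have "xs = filter ((<) 1) xs @ filter (\<lambda>x. \<not> 1 < x) xs"
    using sorted
  proof (induction xs)
    case (Cons a xs)
    show ?case
    proof (cases "1 < a")
      case False
      then have "\<forall>x\<in>set xs. \<not> 1 < x"
        using Cons.prems by auto
      then show ?thesis
        using False by (simp add: filter_empty_conv)
    qed (use Cons in simp)
  qed simp
  moreover have "filter (\<lambda>x. \<not> 1 < x) xs = replicate (count_list xs 1) 1"
    using pos by (induction xs) auto
  moreover have "map Suc ?zs = filter ((<) 1) xs"
    by (induction xs) auto
  ultimately show "xs = add_ones (count_list xs 1) ?zs"
    by (simp add: add_ones_def)
qed

lemma h_partitions_count_ones:
  assumes "m < r"
  shows "{xs \<in> h_partitions r M. count_list xs 1 = m}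
           = add_ones m ` (h_partitions r (M - m - 1) \<union> (if M = m \<and> 0 < m then {[]} else {}))"
    (is "?ones = add_ones m ` ?D")
proof
  show "?ones \<subseteq> add_ones m ` ?D"
  proof
    fix xs assume "xs \<in> ?ones"
    then have xs: "is_partition xs" "xs \<noteq> []" "perimeter xs = M"
      "\<forall>v. count_list xs v < r" "count_list xs 1 = m"
      by (auto simp: h_partitions_def)
    then obtain zs where zs: "is_partition zs" "xs = add_ones m zs"
      using partition_eq_add_ones by metis
    with xs(4) assms have zs_less: "\<forall>v. count_list zs v < r"
      using count_list_add_ones_less_iff by blast
    have "zs \<in> ?D"
    proof (cases "zs = []")
      case True
      then show ?thesis
        using xs zs perimeter_add_ones_Nil[of m] by (auto simp: add_ones_def)
    next
      case False
      then show ?thesis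
        using xs zs zs_less perimeter_add_ones[of zs m] by (auto simp: h_partitions_def)
    qed
    with zs(2) show "xs \<in> add_ones m ` ?D"
      by blast
  qed
  show "add_ones m ` ?D \<subseteq> ?ones"
  proof (rule image_subsetI)
    fix zs assume zs: "zs \<in> ?D"
    then have zs_part: "is_partition zs" and "\<forall>v. count_list zs v < r"
      using assms by (auto simp: h_partitions_def is_partition_def split: if_splits)
    then have "\<forall>v. count_list (add_ones m zs) v < r"
      using assms count_list_add_ones_less_iff by blast
    moreover have "add_ones m zs \<noteq> [] \<and> perimeter (add_ones m zs) = M"
    proof (cases "zs = []")
      case True
      with zs have "M = m" "0 < m"
        by (auto simp: h_partitions_def split: if_splits)
      with True show ?thesis
        using perimeter_add_ones_Nil by (simp add: add_ones_def)
    next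
      case False
      with zs have "zs \<in> h_partitions r (M - m - 1)"
        by (auto split: if_splits)
      moreover from this have "0 < M - m - 1"
        using h_partitions_0 by (metis empty_iff neq0_conv)
      ultimately show ?thesis
        using False perimeter_add_ones[of zs m] by (auto simp: h_partitions_def add_ones_def)
    qed
    ultimately show "add_ones m zs \<in> ?ones"
      using zs_part is_partition_add_ones count_list_add_ones_1 by (simp add: h_partitions_def)
  qed
qed

lemma card_h_partitions_count_ones:
  assumes "m < r"
  shows "card {xs \<in> h_partitions r M. count_list xs 1 = m}
           = h r (M - Suc m) + (if M = m \<and> 0 < m then 1 else 0)"
proof -
  have "[] \<notin> h_partitions r K" for K
    by (simp add: h_partitions_def)
  then show ?thesis
    using h_partitions_count_ones[OF assms]
    by (simp add: card_image[OF inj_on_subset[OF inj_add_ones]] finite_h_partitions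
        h_eq_card_h_partitions)
qed

text \<open>For \<open>i > M\<close> the truncated subtraction makes \<open>h r (M - i) = h r 0 = 0\<close>, as it should.\<close>

lemma h_recurrence: "h r M = (\<Sum>i=1..r. h r (M - i)) + (if 0 < M \<and> M < r then 1 else 0)"
proof -
  have "h_partitions r M = (\<Union>m<r. {xs \<in> h_partitions r M. count_list xs 1 = m})"
    by (auto simp: h_partitions_def)
  also have "card \<dots> = (\<Sum>m<r. card {xs \<in> h_partitions r M. count_list xs 1 = m})"
    by (rule card_UN_disjoint) (auto simp: finite_h_partitions)
  finally have "h r M = (\<Sum>m<r. card {xs \<in> h_partitions r M. count_list xs 1 = m})"
    by (simp add: h_eq_card_h_partitions)
  also have "\<dots> = (\<Sum>m<r. h r (M - Suc m) + (if M = m \<and> 0 < m then 1 else 0))"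
    by (intro sum.cong refl card_h_partitions_count_ones) simp
  also have "\<dots> = (\<Sum>m<r. h r (M - Suc m)) + (\<Sum>m<r. if M = m \<and> 0 < m then 1 else 0)"
    by (rule sum.distrib)
  also have "(\<Sum>m<r. h r (M - Suc m)) = (\<Sum>i=1..r. h r (M - i))"
    by (simp add: sum.atLeast1_atMost_eq)
  also have "(\<Sum>m<r. if M = m \<and> 0 < m then 1 else 0)
      = (\<Sum>m<r. if m = M then if 0 < M then 1 else 0 else (0::nat))"
    by (rule sum.cong) auto
  also have "\<dots> = (if 0 < M \<and> M < r then 1 else 0)"
    by simp
  finally show ?thesis .
qed

lemma sum_fps_X_power: "finite A \<Longrightarrow> (\<Sum>i\<in>A. fps_X ^ i) = Abs_fps (\<lambda>n. if n \<in> A then 1 else 0)"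
  by (rule fps_ext) (simp add: fps_sum_nth)

lemma fps_linear_recurrence:
  fixes a b :: "nat \<Rightarrow> 'a::field"
  assumes rec: "\<And>n. a n = (\<Sum>i=1..r. if i \<le> n then a (n - i) else 0) + b n"
  shows "Abs_fps a = Abs_fps b / (1 - (\<Sum>i=1..r. fps_X ^ i))"
proof -
  let ?Q = "1 - (\<Sum>i=1..r. fps_X ^ i) :: 'a fps"
  have "Abs_fps a * ?Q = Abs_fps b"
  proof (rule fps_ext)
    fix n
    have "fps_nth (Abs_fps a * ?Q) n = a n - (\<Sum>i=1..r. fps_nth (Abs_fps a * fps_X ^ i) n)"
      by (simp add: algebra_simps sum_distrib_left fps_sum_nth)
    also have "\<dots> = b n"
      using rec[of n] by (auto simp: fps_X_power_mult_right_nth intro!: sum.cong)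
    finally show "fps_nth (Abs_fps a * ?Q) n = fps_nth (Abs_fps b) n"
      by simp
  qed
  moreover have "?Q \<noteq> 0"
  proof
    assume "?Q = 0"
    then have "fps_nth ?Q 0 = 0" by simp
    then show False by (simp add: fps_sum_nth)
  qed
  ultimately show ?thesis
    by (metis nonzero_mult_div_cancel_right)
qed

theorem mainTheorem12:
  fixes r :: nat
  assumes "r \<ge> 2"
  shows "(Abs_fps (\<lambda>M. if M \<ge> 1 then of_nat (h r M) else 0) :: real fps)
           = (\<Sum>i=1..r-1. fps_X ^ i) / (1 - (\<Sum>i=1..r. fps_X ^ i))"
proof -
  have "(\<lambda>M. if M \<ge> 1 then real (h r M) else 0) = (\<lambda>M. real (h r M))"
    using h_0 by (auto simp: fun_eq_iff not_le)
  moreover have "(\<Sum>i=1..r-1. fps_X ^ i) = (Abs_fps (\<lambda>n. if 0 < n \<and> n < r then 1 else 0) :: real fps)"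
    by (rule fps_ext) (auto simp: sum_fps_X_power)
  moreover have "real (h r n)
      = (\<Sum>i=1..r. if i \<le> n then real (h r (n - i)) else 0) + (if 0 < n \<and> n < r then 1 else 0)" for n
    by (subst h_recurrence) (auto simp: h_0 intro!: sum.cong)
  ultimately show ?thesis
    using fps_linear_recurrence[where a = "\<lambda>n. real (h r n)"] by simp
qed

end
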